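(* Let $\Phi=(V,C)$ be a $k$-uniform CNF formula such that each variable belongs to at most $d$ clauses, and let $\mu$ be the uniform distribution over its satisfying assignments. Let $k_\alpha,k_\beta\ge1$ be integers with $k_\alpha+k_\beta\le k$, and let $\mathcal{M}\subseteq V$ be such that every clause contains at least $k_\alpha$ variables of $\mathcal{M}$ and at least $k_\beta$ variables of $V\setminus\mathcal{M}$. If $2^{k_\beta}\ge 4\mathrm{e}dk$, then the support of the marginal distribution $\mu_{\mathcal{M}}$ is all of $\{0,1\}^{\mathcal{M}}$, and the Glauber dynamics $P_{\mathsf{Glauber}}$ on $\{0,1\}^{\mathcal{M}}$ has the unique stationary distribution $\mu_{\mathcal{M}}$.
   Context: A CNF formula is $k$-uniform if every clause contains exactly $k$ literals on distinct variables (never both $x$ and $\neg x$). $\mu_{\mathcal{M}}$ is the marginal of $\mu$ on $\mathcal{M}$ and $\mu_v(\cdot\mid\sigma)$ is the marginal of $\mu$ on variable $v$ conditioned on a partial assignment $\sigma$. The Glauber dynamics $P_{\mathsf{Glauber}}$: from state $X\in\{0,1\}^{\mathcal{M}}$, pick $v\in\mathcal{M}$ uniformly at random, keep $X(u)$ for $u\in\mathcal{M}\setminus\{v\}$, and resample $X(v)$ from $\mu_v(\cdot\mid X(\mathcal{M}\setminus\{v\}))$. *)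

theory Defs
  imports Complex_Main
begin

text \<open>A literal is a pair (variable, sign): (x, True) is x and (x, False) is the negation of x.
  A clause is a set of literals, a CNF formula is a set of clauses over the variable set V.\<close>

type_synonym 'v lit = "'v \<times> bool"
type_synonym 'v clause = "'v lit set"

definition clause_vars :: "'v clause \<Rightarrow> 'v set" where
  "clause_vars c = fst ` c"

definition cnf_formula :: "'v set \<Rightarrow> 'v clause set \<Rightarrow> bool" where
  "cnf_formula V C \<longleftrightarrow> finite V \<and> finite C \<and> (\<forall>c\<in>C. finite c \<and> clause_vars c \<subseteq> V)"

definition k_uniform :: "nat \<Rightarrow> 'v clause set \<Rightarrow> bool" where
  "k_uniform k C \<longleftrightarrow> (\<forall>c\<in>C. card c = k \<and> card (clause_vars c) = k)"

definition max_var_degree_le :: "'v set \<Rightarrow> 'v clause set \<Rightarrow> nat \<Rightarrow> bool" where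
  "max_var_degree_le V C d \<longleftrightarrow> (\<forall>x\<in>V. card {c\<in>C. x \<in> clause_vars c} \<le> d)"

definition satisfies :: "('v \<Rightarrow> bool) \<Rightarrow> 'v clause set \<Rightarrow> bool" where
  "satisfies \<sigma> C \<longleftrightarrow> (\<forall>c\<in>C. \<exists>(x, b)\<in>c. \<sigma> x = b)"

text \<open>Assignments {0,1}^S, represented as functions that are False outside S.\<close>
definition assigns :: "'v set \<Rightarrow> ('v \<Rightarrow> bool) set" where
  "assigns S = {\<sigma>. \<forall>x. x \<notin> S \<longrightarrow> \<sigma> x = False}"

definition restr :: "'v set \<Rightarrow> ('v \<Rightarrow> bool) \<Rightarrow> ('v \<Rightarrow> bool)" where
  "restr S \<sigma> = (\<lambda>x. if x \<in> S then \<sigma> x else False)"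

definition sat_assigns :: "'v set \<Rightarrow> 'v clause set \<Rightarrow> ('v \<Rightarrow> bool) set" where
  "sat_assigns V C = {\<sigma> \<in> assigns V. satisfies \<sigma> C}"

definition mu :: "'v set \<Rightarrow> 'v clause set \<Rightarrow> ('v \<Rightarrow> bool) \<Rightarrow> real" where
  "mu V C \<sigma> = (if \<sigma> \<in> sat_assigns V C then 1 / real (card (sat_assigns V C)) else 0)"

definition marg :: "'v set \<Rightarrow> 'v clause set \<Rightarrow> 'v set \<Rightarrow> ('v \<Rightarrow> bool) \<Rightarrow> real" where
  "marg V C M \<tau> = (\<Sum>\<sigma>\<in>{\<sigma> \<in> assigns V. restr M \<sigma> = \<tau>}. mu V C \<sigma>)"

definition cond_marg :: "'v set \<Rightarrow> 'v clause set \<Rightarrow> 'v \<Rightarrow> 'v set \<Rightarrow> ('v \<Rightarrow> bool) \<Rightarrow> bool \<Rightarrow> real" where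
  "cond_marg V C v L X b =
     (\<Sum>\<sigma>\<in>{\<sigma> \<in> assigns V. (\<forall>u\<in>L. \<sigma> u = X u) \<and> \<sigma> v = b}. mu V C \<sigma>) /
     (\<Sum>\<sigma>\<in>{\<sigma> \<in> assigns V. (\<forall>u\<in>L. \<sigma> u = X u)}. mu V C \<sigma>)"

definition glauber :: "'v set \<Rightarrow> 'v clause set \<Rightarrow> 'v set \<Rightarrow> ('v \<Rightarrow> bool) \<Rightarrow> ('v \<Rightarrow> bool) \<Rightarrow> real" where
  "glauber V C M X Y =
     (if M = {} then (if X = Y then 1 else 0)
      else (\<Sum>v\<in>M. if (\<forall>u\<in>M - {v}. Y u = X u) then cond_marg V C v (M - {v}) X (Y v) else 0)
           / real (card M))"

definition stationary :: "'s set \<Rightarrow> ('s \<Rightarrow> 's \<Rightarrow> real) \<Rightarrow> ('s \<Rightarrow> real) \<Rightarrow> bool" where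
  "stationary S P \<pi> \<longleftrightarrow> (\<forall>x\<in>S. \<pi> x \<ge> 0) \<and> sum \<pi> S = 1 \<and>
     (\<forall>y\<in>S. (\<Sum>x\<in>S. \<pi> x * P x y) = \<pi> y)"

end

theory Submission
  imports Defs
begin

(* Fix an assignment \<tau> of M and count the assignments of the free variables V - M that agree
   with \<tau> on M. Every clause has at least k\<^sub>\<beta> free variables and shares one with at most
   k(d - 1) other clauses, and 4kd \<le> 2^k\<^sub>\<beta>; a counting version of the Lovasz local lemma then
   shows that imposing one more clause keeps at least half of the satisfying free assignments, so
   \<tau> extends to a satisfying assignment and \<mu>\<^sub>M has full support. Full support makes every
   single-site update of the Glauber dynamics possible, so the chain is irreducible, and it is
   reversible with respect to \<mu>\<^sub>M. For a stationary \<rho>, reversibility makes \<rho>/\<mu>\<^sub>M harmonic,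
   hence constant by the maximum principle. *)

section \<open>Counting assignments\<close>

definition free_assigns :: "'v set \<Rightarrow> ('v \<Rightarrow> bool) \<Rightarrow> ('v \<Rightarrow> bool) set" where
  "free_assigns W \<tau> = {\<sigma>. \<forall>x. x \<notin> W \<longrightarrow> \<sigma> x = \<tau> x}"

lemma assigns_eq_free_assigns: "assigns S = free_assigns S (\<lambda>_. False)"
  by (simp add: assigns_def free_assigns_def)

lemma finite_free_assigns:
  assumes "finite W"
  shows "finite (free_assigns W \<tau>)"
proof -
  have "free_assigns W \<tau> \<subseteq> (\<lambda>T x. if x \<in> W then x \<in> T else \<tau> x) ` Pow W"
  proof
    fix \<sigma> assume "\<sigma> \<in> free_assigns W \<tau>"
    then have "\<sigma> = (\<lambda>x. if x \<in> W then x \<in> {y\<in>W. \<sigma> y} else \<tau> x)"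
      by (auto simp: free_assigns_def)
    then show "\<sigma> \<in> (\<lambda>T x. if x \<in> W then x \<in> T else \<tau> x) ` Pow W" by blast
  qed
  then show ?thesis using assms by (meson finite_Pow_iff finite_imageI finite_subset)
qed

lemma finite_assigns: "finite V \<Longrightarrow> finite (assigns V)"
  by (simp add: assigns_eq_free_assigns finite_free_assigns)

definition insensitive_on :: "'v set \<Rightarrow> ('v \<Rightarrow> bool) set \<Rightarrow> bool" where
  "insensitive_on U E \<longleftrightarrow> (\<forall>\<sigma>\<in>E. \<forall>\<sigma>'. (\<forall>x. x \<notin> U \<longrightarrow> \<sigma>' x = \<sigma> x) \<longrightarrow> \<sigma>' \<in> E)"

lemma insensitive_on_subset: "insensitive_on U E \<Longrightarrow> U' \<subseteq> U \<Longrightarrow> insensitive_on U' E"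
  unfolding insensitive_on_def by blast

lemma card_eq_double_fixing_var:
  assumes "finite E" and "insensitive_on {u} E"
  shows "card E = 2 * card {\<sigma>\<in>E. \<sigma> u = b}"
proof -
  let ?flip = "\<lambda>\<sigma>. \<sigma>(u := \<not> \<sigma> u)"
  have upd_in: "\<sigma>(u := v) \<in> E" if "\<sigma> \<in> E" for \<sigma> v
    using assms(2) that unfolding insensitive_on_def by simp
  have "bij_betw ?flip {\<sigma>\<in>E. \<sigma> u = b} {\<sigma>\<in>E. \<sigma> u \<noteq> b}"
  proof (rule bij_betw_byWitness[where f' = ?flip])
    show "?flip ` {\<sigma>\<in>E. \<sigma> u = b} \<subseteq> {\<sigma>\<in>E. \<sigma> u \<noteq> b}"
      and "?flip ` {\<sigma>\<in>E. \<sigma> u \<noteq> b} \<subseteq> {\<sigma>\<in>E. \<sigma> u = b}"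
      using upd_in by auto
  qed (auto simp: fun_upd_idem_iff)
  then have "card {\<sigma>\<in>E. \<sigma> u \<noteq> b} = card {\<sigma>\<in>E. \<sigma> u = b}"
    by (simp add: bij_betw_same_card)
  moreover have "card E = card {\<sigma>\<in>E. \<sigma> u = b} + card {\<sigma>\<in>E. \<sigma> u \<noteq> b}"
    using assms(1) by (subst card_Un_disjoint[symmetric]) (auto intro: arg_cong[where f = card])
  ultimately show ?thesis by simp
qed

lemma card_eq_pow_card_fixing:
  assumes "finite U" and "finite E" and "insensitive_on U E"
  shows "card E = 2 ^ card U * card {\<sigma>\<in>E. \<forall>x\<in>U. \<sigma> x = g x}"
  using assms(1,3)
proof (induction U rule: finite_induct)
  case empty
  then show ?case by simp
next
  case (insert u U)
  let ?F = "{\<sigma>\<in>E. \<forall>x\<in>U. \<sigma> x = g x}"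
  have "insensitive_on {u} ?F"
    using insert.prems insert.hyps(2) unfolding insensitive_on_def by auto
  then have "card ?F = 2 * card {\<sigma>\<in>?F. \<sigma> u = g u}"
    using assms(2) by (intro card_eq_double_fixing_var) auto
  moreover have "{\<sigma>\<in>?F. \<sigma> u = g u} = {\<sigma>\<in>E. \<forall>x\<in>insert u U. \<sigma> x = g x}"
    by auto
  moreover have "card E = 2 ^ card U * card ?F"
    using insert.IH insert.prems insensitive_on_subset by blast
  ultimately show ?case using insert.hyps by simp
qed

lemma card_falsifying_le:
  assumes "finite U" and "finite E" and "insensitive_on U E" and "U \<subseteq> clause_vars c"
  shows "2 ^ card U * card {\<sigma>\<in>E. \<not> satisfies \<sigma> {c}} \<le> card E"
proof -
  let ?g = "\<lambda>x. (x, False) \<in> c"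
  have "\<sigma> x = ?g x" if falsified: "\<not> satisfies \<sigma> {c}" and "x \<in> U" for \<sigma> x
  proof -
    have "(x, \<sigma> x) \<notin> c" using falsified by (auto simp: satisfies_def)
    moreover obtain b where "(x, b) \<in> c" using \<open>x \<in> U\<close> assms(4) by (auto simp: clause_vars_def)
    ultimately have "(x, \<not> \<sigma> x) \<in> c" by (cases b; cases "\<sigma> x") auto
    with \<open>(x, \<sigma> x) \<notin> c\<close> show ?thesis by (cases "\<sigma> x") auto
  qed
  then have "card {\<sigma>\<in>E. \<not> satisfies \<sigma> {c}} \<le> card {\<sigma>\<in>E. \<forall>x\<in>U. \<sigma> x = ?g x}"
    using assms(2) by (intro card_mono) auto
  then show ?thesis
    using card_eq_pow_card_fixing[OF assms(1-3), of ?g] by simp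
qed

section \<open>Extending partial assignments: a counting local lemma\<close>

definition free_sat_assigns :: "'v set \<Rightarrow> ('v \<Rightarrow> bool) \<Rightarrow> 'v clause set \<Rightarrow> ('v \<Rightarrow> bool) set" where
  "free_sat_assigns W \<tau> S = {\<sigma> \<in> free_assigns W \<tau>. satisfies \<sigma> S}"

lemma free_sat_assigns_antimono: "S' \<subseteq> S \<Longrightarrow> free_sat_assigns W \<tau> S \<subseteq> free_sat_assigns W \<tau> S'"
  by (auto simp: free_sat_assigns_def satisfies_def)

lemma finite_free_sat_assigns: "finite W \<Longrightarrow> finite (free_sat_assigns W \<tau> S)"
  unfolding free_sat_assigns_def by (simp add: finite_free_assigns)

lemma insensitive_on_free_sat_assigns:
  assumes "U \<subseteq> W" and "\<forall>c\<in>S. clause_vars c \<inter> U = {}"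
  shows "insensitive_on U (free_sat_assigns W \<tau> S)"
  unfolding insensitive_on_def
proof (intro ballI allI impI)
  fix \<sigma> \<sigma>' assume \<sigma>: "\<sigma> \<in> free_sat_assigns W \<tau> S" and agree: "\<forall>x. x \<notin> U \<longrightarrow> \<sigma>' x = \<sigma> x"
  have "satisfies \<sigma>' S"
    unfolding satisfies_def
  proof
    fix c assume "c \<in> S"
    then obtain x b where "(x, b) \<in> c" "\<sigma> x = b"
      using \<sigma> by (auto simp: free_sat_assigns_def satisfies_def)
    moreover from this have "x \<notin> U"
      using assms(2) \<open>c \<in> S\<close> by (force simp: clause_vars_def)
    ultimately show "\<exists>(x, b)\<in>c. \<sigma>' x = b" using agree by auto
  qed
  moreover have "\<sigma>' \<in> free_assigns W \<tau>"
    using \<sigma> agree assms(1) by (auto simp: free_sat_assigns_def free_assigns_def)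
  ultimately show "\<sigma>' \<in> free_sat_assigns W \<tau> S" by (simp add: free_sat_assigns_def)
qed

lemma card_free_sat_assigns_union_bound:
  assumes "finite W" and "finite T"
  shows "card (free_sat_assigns W \<tau> S) \<le> card (free_sat_assigns W \<tau> (S \<union> T))
    + (\<Sum>c\<in>T. card {\<sigma> \<in> free_sat_assigns W \<tau> S. \<not> satisfies \<sigma> {c}})"
proof -
  have "free_sat_assigns W \<tau> S \<subseteq> free_sat_assigns W \<tau> (S \<union> T)
      \<union> (\<Union>c\<in>T. {\<sigma> \<in> free_sat_assigns W \<tau> S. \<not> satisfies \<sigma> {c}})"
    by (auto simp: free_sat_assigns_def satisfies_def)
  then have "card (free_sat_assigns W \<tau> S) \<le> card (free_sat_assigns W \<tau> (S \<union> T)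
      \<union> (\<Union>c\<in>T. {\<sigma> \<in> free_sat_assigns W \<tau> S. \<not> satisfies \<sigma> {c}}))"
    using assms by (intro card_mono) (auto simp: finite_free_sat_assigns)
  also have "\<dots> \<le> card (free_sat_assigns W \<tau> (S \<union> T))
      + card (\<Union>c\<in>T. {\<sigma> \<in> free_sat_assigns W \<tau> S. \<not> satisfies \<sigma> {c}})"
    by (rule card_Un_le)
  also have "\<dots> \<le> card (free_sat_assigns W \<tau> (S \<union> T))
      + (\<Sum>c\<in>T. card {\<sigma> \<in> free_sat_assigns W \<tau> S. \<not> satisfies \<sigma> {c}})"
    using card_UN_le[OF assms(2)] by simp
  finally show ?thesis .
qed

lemma card_free_sat_assigns_le_double:
  assumes "finite W" and "finite T" and "4 * card T \<le> 2 ^ kb"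
    and bad: "\<forall>c\<in>T. 2 ^ kb * card {\<sigma> \<in> free_sat_assigns W \<tau> S. \<not> satisfies \<sigma> {c}}
      \<le> 2 * card (free_sat_assigns W \<tau> S)"
  shows "card (free_sat_assigns W \<tau> S) \<le> 2 * card (free_sat_assigns W \<tau> (S \<union> T))"
proof -
  let ?A = "card (free_sat_assigns W \<tau> S)" and ?A' = "card (free_sat_assigns W \<tau> (S \<union> T))"
  let ?bad = "\<Sum>c\<in>T. card {\<sigma> \<in> free_sat_assigns W \<tau> S. \<not> satisfies \<sigma> {c}}"
  have "2 ^ kb * ?bad \<le> (\<Sum>c\<in>T. 2 * ?A)"
    unfolding sum_distrib_left using bad by (intro sum_mono) blast
  also have "\<dots> = 2 * card T * ?A" by simp
  finally have "2 * (2 ^ kb * ?bad) \<le> 4 * card T * ?A" by simp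
  moreover have "4 * card T * ?A \<le> 2 ^ kb * ?A"
    using assms(3) by (rule mult_le_mono1)
  moreover have "2 ^ kb * ?A \<le> 2 ^ kb * ?A' + 2 ^ kb * ?bad"
    using mult_le_mono2[OF card_free_sat_assigns_union_bound[OF assms(1,2)]] by (simp add: distrib_left)
  ultimately have "2 ^ kb * ?A \<le> 2 ^ kb * (2 * ?A')" by linarith
  then show ?thesis by simp
qed

lemma counting_local_lemma:
  assumes "finite W" and "finite D"
    and free_vars: "\<forall>c\<in>D. kb \<le> card (clause_vars c \<inter> W)"
    and degree: "\<forall>c\<in>D. card {c'\<in>D. c' \<noteq> c \<and> clause_vars c \<inter> clause_vars c' \<inter> W \<noteq> {}} \<le> \<Delta>"
    and "4 * \<Delta> \<le> 2 ^ kb"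
  shows "S \<subseteq> D \<Longrightarrow> c \<in> D \<Longrightarrow> c \<notin> S \<Longrightarrow>
    2 ^ kb * card {\<sigma> \<in> free_sat_assigns W \<tau> S. \<not> satisfies \<sigma> {c}} \<le> 2 * card (free_sat_assigns W \<tau> S)"
proof (induction "card S" arbitrary: S c rule: less_induct)
  case less
  let ?A = "\<lambda>S. free_sat_assigns W \<tau> S"
  let ?B = "\<lambda>S c. {\<sigma> \<in> ?A S. \<not> satisfies \<sigma> {c}}"
  define U where "U = clause_vars c \<inter> W"
  define S\<^sub>1 where "S\<^sub>1 = {c'\<in>S. clause_vars c \<inter> clause_vars c' \<inter> W \<noteq> {}}"
  define S\<^sub>2 where "S\<^sub>2 = S - S\<^sub>1"
  have "finite S" using less.prems(1) assms(2) finite_subset by blast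
  (* The clauses in S\<^sub>2 leave the free variables of c unconstrained, which gives the factor 2 ^ kb;
     the at most \<Delta> clauses in S\<^sub>1 are added back by the induction hypothesis at the cost of a factor 2. *)
  have "insensitive_on U (?A S\<^sub>2)"
    by (rule insensitive_on_free_sat_assigns) (auto simp: U_def S\<^sub>1_def S\<^sub>2_def)
  then have "2 ^ card U * card (?B S\<^sub>2 c) \<le> card (?A S\<^sub>2)"
    using assms(1) by (intro card_falsifying_le) (auto simp: U_def finite_free_sat_assigns)
  moreover have "2 ^ kb \<le> (2::nat) ^ card U"
    using free_vars less.prems(2) by (simp add: U_def)
  moreover have "card (?B S c) \<le> card (?B S\<^sub>2 c)"
    using free_sat_assigns_antimono[of S\<^sub>2 S] assms(1)
    by (intro card_mono) (auto simp: S\<^sub>2_def finite_free_sat_assigns)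
  ultimately have "2 ^ kb * card (?B S c) \<le> card (?A S\<^sub>2)"
    by (meson le_trans mult_le_mono)
  moreover have "card (?A S\<^sub>2) \<le> 2 * card (?A (S\<^sub>2 \<union> S\<^sub>1))"
  proof (rule card_free_sat_assigns_le_double[OF assms(1)])
    show "finite S\<^sub>1" using \<open>finite S\<close> by (simp add: S\<^sub>1_def)
    have "card S\<^sub>1 \<le> card {c'\<in>D. c' \<noteq> c \<and> clause_vars c \<inter> clause_vars c' \<inter> W \<noteq> {}}"
      using less.prems assms(2) by (intro card_mono) (auto simp: S\<^sub>1_def)
    then show "4 * card S\<^sub>1 \<le> 2 ^ kb"
      using degree less.prems(2) assms(5) by fastforce
    show "\<forall>c'\<in>S\<^sub>1. 2 ^ kb * card (?B S\<^sub>2 c') \<le> 2 * card (?A S\<^sub>2)"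
    proof
      fix c' assume "c' \<in> S\<^sub>1"
      then have "S\<^sub>2 \<subset> S" by (auto simp: S\<^sub>1_def S\<^sub>2_def)
      then have "card S\<^sub>2 < card S" using \<open>finite S\<close> by (rule psubset_card_mono[rotated])
      then show "2 ^ kb * card (?B S\<^sub>2 c') \<le> 2 * card (?A S\<^sub>2)"
        using less.hyps \<open>c' \<in> S\<^sub>1\<close> less.prems(1) by (auto simp: S\<^sub>1_def S\<^sub>2_def)
    qed
  qed
  moreover have "S\<^sub>2 \<union> S\<^sub>1 = S" by (auto simp: S\<^sub>1_def S\<^sub>2_def)
  ultimately show ?case by simp
qed

lemma free_sat_assigns_nonempty:
  assumes "finite W" and "finite D"
    and free_vars: "\<forall>c\<in>D. kb \<le> card (clause_vars c \<inter> W)"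
    and degree: "\<forall>c\<in>D. card {c'\<in>D. c' \<noteq> c \<and> clause_vars c \<inter> clause_vars c' \<inter> W \<noteq> {}} \<le> \<Delta>"
    and "4 * \<Delta> \<le> 2 ^ kb" and "4 \<le> (2::nat) ^ kb"
  shows "free_sat_assigns W \<tau> D \<noteq> {}"
proof -
  have "card (free_sat_assigns W \<tau> D) > 0"
    using assms(2) subset_refl
  proof (induction D rule: finite_subset_induct')
    case empty
    have "\<tau> \<in> free_sat_assigns W \<tau> {}"
      by (simp add: free_sat_assigns_def free_assigns_def satisfies_def)
    then show ?case using assms(1) card_gt_0_iff finite_free_sat_assigns by blast
  next
    case (insert c S)
    let ?A = "free_sat_assigns W \<tau> S" and ?B = "{\<sigma> \<in> free_sat_assigns W \<tau> S. \<not> satisfies \<sigma> {c}}"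
    have "2 ^ kb * card ?B \<le> 2 * card ?A"
      using counting_local_lemma[OF assms(1-5) insert.hyps(3,2,4)] .
    moreover have "4 * card ?B \<le> 2 ^ kb * card ?B"
      using \<open>4 \<le> 2 ^ kb\<close> by (rule mult_le_mono1)
    ultimately have "card ?B < card ?A"
      using insert.IH by linarith
    moreover have "free_sat_assigns W \<tau> (insert c S) = ?A - ?B"
      by (auto simp: free_sat_assigns_def satisfies_def)
    ultimately show ?case
      using assms(1) by (simp add: card_Diff_subset finite_free_sat_assigns)
  qed
  then show ?thesis by force
qed

lemma card_clauses_sharing_var_le:
  assumes "cnf_formula V C" and "max_var_degree_le V C d" and "c \<in> C"
  shows "card {c'\<in>C. c' \<noteq> c \<and> clause_vars c \<inter> clause_vars c' \<inter> W \<noteq> {}} \<le> card (clause_vars c) * (d - 1)"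
proof -
  have "finite C" and "finite (clause_vars c)" and "clause_vars c \<subseteq> V"
    using assms(1,3) by (auto simp: cnf_formula_def clause_vars_def)
  have "{c'\<in>C. c' \<noteq> c \<and> clause_vars c \<inter> clause_vars c' \<inter> W \<noteq> {}}
      \<subseteq> (\<Union>x\<in>clause_vars c. {c'\<in>C. x \<in> clause_vars c'} - {c})"
    by blast
  then have "card {c'\<in>C. c' \<noteq> c \<and> clause_vars c \<inter> clause_vars c' \<inter> W \<noteq> {}}
      \<le> card (\<Union>x\<in>clause_vars c. {c'\<in>C. x \<in> clause_vars c'} - {c})"
    using \<open>finite C\<close> \<open>finite (clause_vars c)\<close> by (intro card_mono) auto
  also have "\<dots> \<le> (\<Sum>x\<in>clause_vars c. card ({c'\<in>C. x \<in> clause_vars c'} - {c}))"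
    using \<open>finite (clause_vars c)\<close> by (rule card_UN_le)
  also have "\<dots> \<le> (\<Sum>x\<in>clause_vars c. d - 1)"
  proof (rule sum_mono)
    fix x assume x: "x \<in> clause_vars c"
    then have "card {c'\<in>C. x \<in> clause_vars c'} \<le> d"
      using assms(2) \<open>clause_vars c \<subseteq> V\<close> by (auto simp: max_var_degree_le_def)
    then show "card ({c'\<in>C. x \<in> clause_vars c'} - {c}) \<le> d - 1"
      using x assms(3) \<open>finite C\<close> by (simp add: card_Diff_singleton)
  qed
  finally show ?thesis by simp
qed

lemma max_var_degree_pos:
  assumes "cnf_formula V C" and "max_var_degree_le V C d" and "c \<in> C" and "x \<in> clause_vars c"
  shows "0 < d"
proof -
  have "0 < card {c'\<in>C. x \<in> clause_vars c'}"
    using assms by (auto simp: cnf_formula_def card_gt_0_iff)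
  also have "\<dots> \<le> d"
    using assms by (auto simp: cnf_formula_def max_var_degree_le_def)
  finally show ?thesis .
qed

lemma satisfying_extension_exists:
  assumes formula: "cnf_formula V C" and uniform: "k_uniform k C" and degree: "max_var_degree_le V C d"
    and "M \<subseteq> V" and "1 \<le> kb" and free_vars: "\<forall>c\<in>C. kb \<le> card (clause_vars c - M)"
    and "4 * k * d \<le> 2 ^ kb" and "\<tau> \<in> assigns M"
  shows "\<exists>\<sigma>\<in>sat_assigns V C. restr M \<sigma> = \<tau>"
proof -
  define W where "W = V - M"
  have "finite V" and "finite C" and vars_V: "\<forall>c\<in>C. clause_vars c \<subseteq> V"
    using formula by (auto simp: cnf_formula_def)
  have "free_sat_assigns W \<tau> C \<noteq> {}"
  proof (cases "C = {}")
    case True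
    then show ?thesis by (auto simp: free_sat_assigns_def free_assigns_def satisfies_def)
  next
    case False
    then obtain c where "c \<in> C" by blast
    have "kb \<le> card (clause_vars c - M)" using free_vars \<open>c \<in> C\<close> by blast
    then obtain x where "x \<in> clause_vars c" using \<open>1 \<le> kb\<close> by fastforce
    have "card (clause_vars c - M) \<le> card (clause_vars c)"
      using vars_V \<open>c \<in> C\<close> \<open>finite V\<close> by (intro card_mono) (auto intro: finite_subset)
    then have "1 \<le> k"
      using \<open>kb \<le> card (clause_vars c - M)\<close> \<open>1 \<le> kb\<close> uniform \<open>c \<in> C\<close> by (simp add: k_uniform_def)
    moreover have "1 \<le> d"
      using max_var_degree_pos[OF formula degree \<open>c \<in> C\<close> \<open>x \<in> clause_vars c\<close>] by simp
    ultimately have "1 \<le> k * d" by simp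
    moreover have "k * (d - 1) \<le> k * d" by simp
    ultimately have "4 \<le> (2::nat) ^ kb" and "4 * (k * (d - 1)) \<le> 2 ^ kb"
      using \<open>4 * k * d \<le> 2 ^ kb\<close> by linarith+
    moreover have "\<forall>c\<in>C. card {c'\<in>C. c' \<noteq> c \<and> clause_vars c \<inter> clause_vars c' \<inter> W \<noteq> {}} \<le> k * (d - 1)"
      using card_clauses_sharing_var_le[OF formula degree] uniform by (simp add: k_uniform_def)
    moreover have "\<forall>c\<in>C. kb \<le> card (clause_vars c \<inter> W)"
    proof
      fix c assume "c \<in> C"
      then have "clause_vars c \<inter> W = clause_vars c - M" using vars_V by (auto simp: W_def)
      then show "kb \<le> card (clause_vars c \<inter> W)" using free_vars \<open>c \<in> C\<close> by simp
    qed
    ultimately show ?thesis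
      using \<open>finite V\<close> \<open>finite C\<close> by (intro free_sat_assigns_nonempty) (simp_all add: W_def)
  qed
  then obtain \<sigma> where "\<sigma> \<in> free_assigns W \<tau>" and "satisfies \<sigma> C"
    by (auto simp: free_sat_assigns_def)
  then have "\<sigma> \<in> sat_assigns V C" and "restr M \<sigma> = \<tau>"
    using \<open>M \<subseteq> V\<close> \<open>\<tau> \<in> assigns M\<close>
    by (auto simp: W_def free_assigns_def sat_assigns_def assigns_def restr_def)
  then show ?thesis by blast
qed

section \<open>Reversible Markov kernels\<close>

definition stochastic :: "'s set \<Rightarrow> ('s \<Rightarrow> 's \<Rightarrow> real) \<Rightarrow> bool" where
  "stochastic S P \<longleftrightarrow> (\<forall>x\<in>S. \<forall>y\<in>S. 0 \<le> P x y) \<and> (\<forall>x\<in>S. (\<Sum>y\<in>S. P x y) = 1)"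

definition reversible :: "'s set \<Rightarrow> ('s \<Rightarrow> 's \<Rightarrow> real) \<Rightarrow> ('s \<Rightarrow> real) \<Rightarrow> bool" where
  "reversible S P \<pi> \<longleftrightarrow> (\<forall>x\<in>S. \<forall>y\<in>S. \<pi> x * P x y = \<pi> y * P y x)"

definition positive_steps :: "'s set \<Rightarrow> ('s \<Rightarrow> 's \<Rightarrow> real) \<Rightarrow> ('s \<times> 's) set" where
  "positive_steps S P = {(x, y). x \<in> S \<and> y \<in> S \<and> 0 < P x y}"

definition irreducible_kernel :: "'s set \<Rightarrow> ('s \<Rightarrow> 's \<Rightarrow> real) \<Rightarrow> bool" where
  "irreducible_kernel S P \<longleftrightarrow> S \<times> S \<subseteq> (positive_steps S P)\<^sup>*"

lemma reversible_imp_stationary: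
  assumes "stochastic S P" and "reversible S P \<pi>"
    and "\<forall>x\<in>S. 0 \<le> \<pi> x" and "sum \<pi> S = 1"
  shows "stationary S P \<pi>"
  unfolding stationary_def
proof (intro conjI ballI assms(3,4)[rule_format])
  fix y assume "y \<in> S"
  then have "(\<Sum>x\<in>S. \<pi> x * P x y) = (\<Sum>x\<in>S. \<pi> y * P y x)"
    using assms(2) by (intro sum.cong) (auto simp: reversible_def)
  also have "\<dots> = \<pi> y"
    using assms(1) \<open>y \<in> S\<close> by (simp add: stochastic_def sum_distrib_left[symmetric])
  finally show "(\<Sum>x\<in>S. \<pi> x * P x y) = \<pi> y" .
qed

lemma harmonic_max_propagates:
  assumes "finite S" and "stochastic S P"
    and harmonic: "\<forall>y\<in>S. (\<Sum>x\<in>S. P y x * h x) = h y"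
    and max: "\<forall>x\<in>S. h x \<le> h y" and "(y, z) \<in> positive_steps S P"
  shows "h z = h y"
proof -
  have "y \<in> S" "z \<in> S" "0 < P y z" using assms(5) by (auto simp: positive_steps_def)
  have "(\<Sum>x\<in>S. P y x * (h y - h x)) = h y * (\<Sum>x\<in>S. P y x) - (\<Sum>x\<in>S. P y x * h x)"
    by (simp add: algebra_simps sum_subtractf sum_distrib_left)
  also have "\<dots> = 0"
    using assms(2) harmonic \<open>y \<in> S\<close> by (simp add: stochastic_def)
  finally have "\<forall>x\<in>S. P y x * (h y - h x) = 0"
    using assms(1,2) max \<open>y \<in> S\<close> by (subst sum_nonneg_eq_0_iff[symmetric]) (auto simp: stochastic_def)
  then show ?thesis using \<open>z \<in> S\<close> \<open>0 < P y z\<close> by fastforce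
qed

lemma irreducible_harmonic_const:
  assumes "finite S" and "stochastic S P" and "irreducible_kernel S P"
    and harmonic: "\<forall>y\<in>S. (\<Sum>x\<in>S. P y x * h x) = h y"
    and "x \<in> S" and "y \<in> S"
  shows "h x = h y"
proof -
  have "Max (h ` S) \<in> h ` S" using assms(1,5) by (intro Max_in) auto
  then obtain y\<^sub>0 where "y\<^sub>0 \<in> S" and "h y\<^sub>0 = Max (h ` S)" by auto
  then have max: "\<forall>x\<in>S. h x \<le> h y\<^sub>0" using assms(1) by simp
  have reach_max: "h z = h y\<^sub>0" if "(y\<^sub>0, z) \<in> (positive_steps S P)\<^sup>*" for z
    using that
  proof (induction rule: rtrancl_induct)
    case (step z z')
    then have "\<forall>x\<in>S. h x \<le> h z" using max by simp
    then show ?case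
      using harmonic_max_propagates[OF assms(1,2) harmonic _ step.hyps(2)] step.IH by simp
  qed simp
  have "(y\<^sub>0, x) \<in> (positive_steps S P)\<^sup>*" and "(y\<^sub>0, y) \<in> (positive_steps S P)\<^sup>*"
    using assms(3,5,6) \<open>y\<^sub>0 \<in> S\<close> unfolding irreducible_kernel_def by blast+
  then show ?thesis using reach_max by metis
qed

lemma reversible_stationary_unique:
  assumes "finite S" and "stochastic S P" and "irreducible_kernel S P"
    and "reversible S P \<pi>" and pos: "\<forall>x\<in>S. 0 < \<pi> x" and "sum \<pi> S = 1"
    and "stationary S P \<rho>" and "x \<in> S"
  shows "\<rho> x = \<pi> x"
proof -
  define h where "h x = \<rho> x / \<pi> x" for x
  have \<rho>_eq: "\<rho> y = h y * \<pi> y" if "y \<in> S" for y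
    using pos[rule_format, OF that] by (simp add: h_def)
  have "(\<Sum>z\<in>S. P y z * h z) = h y" if "y \<in> S" for y
  proof -
    have "\<pi> y * (\<Sum>z\<in>S. P y z * h z) = (\<Sum>z\<in>S. \<pi> z * P z y * h z)"
      using assms(4) that by (auto simp: reversible_def sum_distrib_left mult.assoc intro: sum.cong)
    also have "\<dots> = (\<Sum>z\<in>S. \<rho> z * P z y)"
      using \<rho>_eq by (intro sum.cong) auto
    also have "\<dots> = \<rho> y"
      using assms(7) that by (simp add: stationary_def)
    finally have "\<pi> y * (\<Sum>z\<in>S. P y z * h z) = \<rho> y" .
    then have "(\<Sum>z\<in>S. P y z * h z) = \<rho> y / \<pi> y"
      using pos that by (intro eq_divide_imp) (auto simp: mult.commute)
    then show ?thesis by (simp add: h_def[of y])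
  qed
  then have h_const: "h y = h x" if "y \<in> S" for y
    using irreducible_harmonic_const[OF assms(1-3)] that assms(8) by blast
  have "1 = (\<Sum>y\<in>S. h x * \<pi> y)"
    using assms(7) \<rho>_eq h_const by (auto simp: stationary_def intro: sum.cong)
  then have "h x = 1" using assms(6) by (simp add: sum_distrib_left[symmetric])
  then show ?thesis using \<rho>_eq assms(8) by simp
qed

section \<open>Glauber dynamics on the marginal\<close>

lemma mu_nonneg: "0 \<le> mu V C \<sigma>"
  by (simp add: mu_def)

lemma marg_nonneg: "0 \<le> marg V C M \<tau>"
  unfolding marg_def by (intro sum_nonneg mu_nonneg)

lemma marg_pos:
  assumes "finite V" and "\<sigma> \<in> sat_assigns V C" and "restr M \<sigma> = \<tau>"
  shows "0 < marg V C M \<tau>"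
proof -
  have "finite (sat_assigns V C)"
    using assms(1) by (simp add: sat_assigns_def finite_assigns)
  then have "0 < mu V C \<sigma>"
    using assms(2) by (auto simp: mu_def card_gt_0_iff)
  also have "\<dots> \<le> marg V C M \<tau>"
    unfolding marg_def using assms
    by (intro member_le_sum mu_nonneg) (auto simp: sat_assigns_def finite_assigns)
  finally show ?thesis .
qed

lemma sum_marg_eq_1:
  assumes "finite V" and "finite M" and "sat_assigns V C \<noteq> {}"
  shows "sum (marg V C M) (assigns M) = 1"
proof -
  have "finite (assigns V)" using assms(1) by (rule finite_assigns)
  have "sum (marg V C M) (assigns M) = (\<Sum>\<tau>\<in>assigns M. sum (mu V C) {\<sigma> \<in> assigns V. restr M \<sigma> = \<tau>})"
    by (simp add: marg_def)
  also have "\<dots> = sum (mu V C) (assigns V)"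
    using \<open>finite (assigns V)\<close> finite_assigns[OF assms(2)]
    by (intro sum.group) (auto simp: assigns_def restr_def)
  also have "\<dots> = sum (mu V C) (sat_assigns V C)"
    using \<open>finite (assigns V)\<close> by (intro sum.mono_neutral_right) (auto simp: sat_assigns_def mu_def)
  also have "\<dots> = 1"
    using assms(3) \<open>finite (assigns V)\<close> by (simp add: mu_def sat_assigns_def card_gt_0_iff)
  finally show ?thesis .
qed

lemma upd_in_assigns: "X \<in> assigns M \<Longrightarrow> v \<in> M \<Longrightarrow> X(v := b) \<in> assigns M"
  by (auto simp: assigns_def)

lemma upd_eq_if_agree_off:
  assumes "X \<in> assigns M" and "Y \<in> assigns M" and "\<forall>u\<in>M - {v}. Y u = X u"
  shows "X(v := b) = Y(v := b)"
  using assms by (auto simp: assigns_def fun_eq_iff)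

lemma marg_eq_sum_agreeing:
  assumes "\<tau> \<in> assigns M"
  shows "marg V C M \<tau> = (\<Sum>\<sigma>\<in>{\<sigma>\<in>assigns V. \<forall>u\<in>M. \<sigma> u = \<tau> u}. mu V C \<sigma>)"
proof -
  have "{\<sigma>\<in>assigns V. restr M \<sigma> = \<tau>} = {\<sigma>\<in>assigns V. \<forall>u\<in>M. \<sigma> u = \<tau> u}"
    using assms by (auto simp: restr_def assigns_def)
  then show ?thesis by (simp add: marg_def)
qed

definition fiber_mass :: "'v set \<Rightarrow> 'v clause set \<Rightarrow> 'v set \<Rightarrow> ('v \<Rightarrow> bool) \<Rightarrow> 'v \<Rightarrow> real" where
  "fiber_mass V C M X v = marg V C M (X(v := True)) + marg V C M (X(v := False))"

lemma fiber_mass_pos: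
  assumes "X \<in> assigns M" and "v \<in> M" and "\<forall>\<tau>\<in>assigns M. 0 < marg V C M \<tau>"
  shows "0 < fiber_mass V C M X v"
  using assms upd_in_assigns[OF assms(1,2)] by (simp add: fiber_mass_def add_pos_pos)

lemma cond_marg_eq_fiber_ratio:
  assumes "finite V" and "X \<in> assigns M" and "v \<in> M"
  shows "cond_marg V C v (M - {v}) X b = marg V C M (X(v := b)) / fiber_mass V C M X v"
proof -
  let ?N = "\<lambda>b. {\<sigma>\<in>assigns V. (\<forall>u\<in>M - {v}. \<sigma> u = X u) \<and> \<sigma> v = b}"
  have N_eq: "(\<Sum>\<sigma>\<in>?N b. mu V C \<sigma>) = marg V C M (X(v := b))" for b
  proof -
    have "?N b = {\<sigma>\<in>assigns V. \<forall>u\<in>M. \<sigma> u = (X(v := b)) u}"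
      using assms(3) by auto
    then show ?thesis
      using marg_eq_sum_agreeing[OF upd_in_assigns[OF assms(2,3)]] by simp
  qed
  have "{\<sigma>\<in>assigns V. \<forall>u\<in>M - {v}. \<sigma> u = X u} = ?N True \<union> ?N False"
    by auto
  then have "(\<Sum>\<sigma>\<in>{\<sigma>\<in>assigns V. \<forall>u\<in>M - {v}. \<sigma> u = X u}. mu V C \<sigma>) = fiber_mass V C M X v"
    using finite_assigns[OF assms(1)]
    by (simp add: sum.union_disjoint disjoint_iff N_eq[symmetric] fiber_mass_def)
  then show ?thesis by (simp add: cond_marg_def N_eq)
qed

lemma glauber_eq:
  assumes "finite V" and "X \<in> assigns M" and "Y \<in> assigns M" and "M \<noteq> {}"
  shows "glauber V C M X Y = (\<Sum>v\<in>M. if \<forall>u\<in>M - {v}. Y u = X u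
      then marg V C M Y / fiber_mass V C M X v else 0) / real (card M)"
proof -
  have "(if \<forall>u\<in>M - {v}. Y u = X u then cond_marg V C v (M - {v}) X (Y v) else 0)
      = (if \<forall>u\<in>M - {v}. Y u = X u then marg V C M Y / fiber_mass V C M X v else 0)"
    if "v \<in> M" for v
    using cond_marg_eq_fiber_ratio[OF assms(1,2) that] upd_eq_if_agree_off[OF assms(2,3), of v "Y v"]
    by simp
  then show ?thesis
    using assms(4) by (simp add: glauber_def cong: sum.cong)
qed

lemma glauber_nonneg: "0 \<le> glauber V C M X Y"
proof -
  have "0 \<le> cond_marg V C v L X b" for v L b
    unfolding cond_marg_def by (intro divide_nonneg_nonneg sum_nonneg mu_nonneg)
  then have "0 \<le> (\<Sum>v\<in>M. if \<forall>u\<in>M - {v}. Y u = X u then cond_marg V C v (M - {v}) X (Y v) else 0)"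
    by (intro sum_nonneg) simp
  then show ?thesis by (simp add: glauber_def)
qed

lemma glauber_reversible:
  assumes "finite V"
  shows "reversible (assigns M) (glauber V C M) (marg V C M)"
  unfolding reversible_def
proof (intro ballI)
  fix X Y assume X: "X \<in> assigns M" and Y: "Y \<in> assigns M"
  show "marg V C M X * glauber V C M X Y = marg V C M Y * glauber V C M Y X"
  proof (cases "M = {}")
    case True
    then show ?thesis by (simp add: glauber_def)
  next
    case False
    have flux: "marg V C M Z * glauber V C M Z Z' = (\<Sum>v\<in>M. marg V C M Z *
        (if \<forall>u\<in>M - {v}. Z' u = Z u then marg V C M Z' / fiber_mass V C M Z v else 0)) / real (card M)"
      if "Z \<in> assigns M" "Z' \<in> assigns M" for Z Z'
      using that False assms by (simp add: glauber_eq sum_distrib_left)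
    have "marg V C M X * (if \<forall>u\<in>M - {v}. Y u = X u then marg V C M Y / fiber_mass V C M X v else 0)
        = marg V C M Y * (if \<forall>u\<in>M - {v}. X u = Y u then marg V C M X / fiber_mass V C M Y v else 0)"
      for v
    proof (cases "\<forall>u\<in>M - {v}. Y u = X u")
      case True
      then have "fiber_mass V C M X v = fiber_mass V C M Y v"
        using upd_eq_if_agree_off[OF X Y] by (simp add: fiber_mass_def)
      with True show ?thesis by simp
    qed auto
    then show ?thesis
      unfolding flux[OF X Y] flux[OF Y X] by simp
  qed
qed

lemma glauber_row_sum:
  assumes "finite V" and "finite M" and "X \<in> assigns M"
    and support: "\<forall>\<tau>\<in>assigns M. 0 < marg V C M \<tau>"
  shows "(\<Sum>Y\<in>assigns M. glauber V C M X Y) = 1"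
proof (cases "M = {}")
  case True
  then show ?thesis using assms(3) finite_assigns[OF assms(2)] by (simp add: glauber_def)
next
  case False
  have fiber_sum: "(\<Sum>Y\<in>assigns M. if \<forall>u\<in>M - {v}. Y u = X u
      then cond_marg V C v (M - {v}) X (Y v) else 0) = 1" if "v \<in> M" for v
  proof -
    have "{Y\<in>assigns M. \<forall>u\<in>M - {v}. Y u = X u} = {X(v := True), X(v := False)}"
    proof (intro equalityI subsetI)
      fix Y assume "Y \<in> {Y\<in>assigns M. \<forall>u\<in>M - {v}. Y u = X u}"
      then have "X(v := Y v) = Y"
        using upd_eq_if_agree_off[OF assms(3), of Y v "Y v"] by simp
      then obtain b where "Y = X(v := b)" by metis
      then show "Y \<in> {X(v := True), X(v := False)}" by (cases b) simp_all
    qed (use upd_in_assigns[OF assms(3) that] in auto)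
    moreover have "X(v := True) \<noteq> X(v := False)" by (auto dest: fun_cong[where x = v])
    ultimately have "(\<Sum>Y\<in>assigns M. if \<forall>u\<in>M - {v}. Y u = X u
        then cond_marg V C v (M - {v}) X (Y v) else 0)
        = cond_marg V C v (M - {v}) X True + cond_marg V C v (M - {v}) X False"
      using finite_assigns[OF assms(2)] by (simp add: sum.inter_filter[symmetric])
    also have "\<dots> = 1"
      using fiber_mass_pos[OF assms(3) that support]
      by (simp add: cond_marg_eq_fiber_ratio[OF assms(1,3) that] fiber_mass_def add_divide_distrib[symmetric])
    finally show ?thesis .
  qed
  have "(\<Sum>Y\<in>assigns M. glauber V C M X Y) = (\<Sum>v\<in>M. \<Sum>Y\<in>assigns M. if \<forall>u\<in>M - {v}. Y u = X u
      then cond_marg V C v (M - {v}) X (Y v) else 0) / real (card M)"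
    using False by (simp add: glauber_def sum_divide_distrib[symmetric] sum.swap[of _ "assigns M"])
  also have "\<dots> = 1"
    using False assms(2) by (simp add: fiber_sum)
  finally show ?thesis .
qed

lemma glauber_stochastic:
  assumes "finite V" and "finite M" and "\<forall>\<tau>\<in>assigns M. 0 < marg V C M \<tau>"
  shows "stochastic (assigns M) (glauber V C M)"
  using glauber_row_sum[OF assms(1,2) _ assms(3)] by (simp add: stochastic_def glauber_nonneg)

lemma glauber_flip_pos:
  assumes "finite V" and "finite M" and "X \<in> assigns M" and "v \<in> M"
    and support: "\<forall>\<tau>\<in>assigns M. 0 < marg V C M \<tau>"
  shows "0 < glauber V C M X (X(v := b))"
proof -
  let ?term = "\<lambda>w. if \<forall>u\<in>M - {w}. (X(v := b)) u = X u
    then marg V C M (X(v := b)) / fiber_mass V C M X w else 0"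
  have "M \<noteq> {}" using assms(4) by blast
  have "0 < ?term v"
    using support upd_in_assigns[OF assms(3,4)] fiber_mass_pos[OF assms(3,4) support] by simp
  also have "\<dots> \<le> sum ?term M"
    using assms(2,4)
    by (intro member_le_sum) (simp_all add: fiber_mass_def marg_nonneg)
  finally have "0 < sum ?term M" .
  moreover have "0 < real (card M)" using assms(2) \<open>M \<noteq> {}\<close> by (simp add: card_gt_0_iff)
  ultimately show ?thesis
    unfolding glauber_eq[OF assms(1,3) upd_in_assigns[OF assms(3,4)] \<open>M \<noteq> {}\<close>]
    by (rule divide_pos_pos)
qed

lemma glauber_irreducible:
  assumes "finite V" and "finite M" and support: "\<forall>\<tau>\<in>assigns M. 0 < marg V C M \<tau>"
  shows "irreducible_kernel (assigns M) (glauber V C M)"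
  unfolding irreducible_kernel_def
proof clarify
  fix X Y assume X: "X \<in> assigns M" and Y: "Y \<in> assigns M"
  let ?R = "(positive_steps (assigns M) (glauber V C M))\<^sup>*"
  have "\<forall>Y\<in>assigns M. {u. Y u \<noteq> X u} \<subseteq> F \<longrightarrow> (X, Y) \<in> ?R" if "finite F" "F \<subseteq> M" for F
    using that
  proof (induction F rule: finite_induct)
    case empty
    then show ?case by (auto simp: fun_eq_iff)
  next
    case (insert v F)
    show ?case
    proof (intro ballI impI)
      fix Y assume "Y \<in> assigns M" and diff: "{u. Y u \<noteq> X u} \<subseteq> insert v F"
      have "v \<in> M" using insert.prems by simp
      let ?Y' = "Y(v := X v)"
      have "?Y' \<in> assigns M" using upd_in_assigns[OF \<open>Y \<in> assigns M\<close> \<open>v \<in> M\<close>] .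
      moreover have "{u. ?Y' u \<noteq> X u} \<subseteq> F" using diff by auto
      ultimately have "(X, ?Y') \<in> ?R" using insert.IH insert.prems by blast
      moreover have "0 < glauber V C M ?Y' (?Y'(v := Y v))"
        using glauber_flip_pos[OF assms(1,2) \<open>?Y' \<in> assigns M\<close> \<open>v \<in> M\<close> support] .
      then have "(?Y', Y) \<in> positive_steps (assigns M) (glauber V C M)"
        using \<open>?Y' \<in> assigns M\<close> \<open>Y \<in> assigns M\<close> by (simp add: positive_steps_def)
      ultimately show "(X, Y) \<in> ?R" by (rule rtrancl_into_rtrancl)
    qed
  qed
  moreover have "{u. Y u \<noteq> X u} \<subseteq> M" using X Y by (auto simp: assigns_def)
  ultimately show "(X, Y) \<in> ?R" using assms(2) Y by blast
qed

theorem lemma4p2: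
  fixes V M :: "'v set" and C :: "'v clause set" and k d k\<^sub>\<alpha> k\<^sub>\<beta> :: nat
  assumes "cnf_formula V C"
    and "k_uniform k C"
    and "max_var_degree_le V C d"
    and "k\<^sub>\<alpha> \<ge> 1" and "k\<^sub>\<beta> \<ge> 1" and "k\<^sub>\<alpha> + k\<^sub>\<beta> \<le> k"
    and "M \<subseteq> V"
    and "\<forall>c\<in>C. card (clause_vars c \<inter> M) \<ge> k\<^sub>\<alpha> \<and> card (clause_vars c - M) \<ge> k\<^sub>\<beta>"
    and "(2::real) ^ k\<^sub>\<beta> \<ge> 4 * exp 1 * real d * real k"
  shows "(\<forall>\<tau>\<in>assigns M. marg V C M \<tau> > 0)
    \<and> stationary (assigns M) (glauber V C M) (marg V C M)
    \<and> (\<forall>\<pi>. stationary (assigns M) (glauber V C M) \<pi> \<longrightarrow> (\<forall>\<tau>\<in>assigns M. \<pi> \<tau> = marg V C M \<tau>))"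
proof -
  have "finite V" using assms(1) by (simp add: cnf_formula_def)
  then have "finite M" using assms(7) by (rule finite_subset[rotated])
  have "real (4 * k * d) = 4 * real d * real k * 1" by simp
  also have "\<dots> \<le> 4 * real d * real k * exp 1" by (intro mult_left_mono) auto
  also have "\<dots> \<le> 2 ^ k\<^sub>\<beta>" using assms(9) by (simp add: ac_simps)
  finally have "4 * k * d \<le> 2 ^ k\<^sub>\<beta>"
    by (metis of_nat_le_iff of_nat_numeral of_nat_power)
  then have extension: "\<exists>\<sigma>\<in>sat_assigns V C. restr M \<sigma> = \<tau>" if "\<tau> \<in> assigns M" for \<tau>
    using satisfying_extension_exists[OF assms(1-3,7,5)] assms(8) that by blast
  then have support: "\<forall>\<tau>\<in>assigns M. 0 < marg V C M \<tau>"
    using marg_pos[OF \<open>finite V\<close>] by blast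
  have "sat_assigns V C \<noteq> {}"
    using extension[of "\<lambda>_. False"] by (auto simp: assigns_def)
  then have total: "sum (marg V C M) (assigns M) = 1"
    using sum_marg_eq_1[OF \<open>finite V\<close> \<open>finite M\<close>] by blast
  have stochastic: "stochastic (assigns M) (glauber V C M)"
    and reversible: "reversible (assigns M) (glauber V C M) (marg V C M)"
    and irreducible: "irreducible_kernel (assigns M) (glauber V C M)"
    using \<open>finite V\<close> \<open>finite M\<close> support
    by (simp_all add: glauber_stochastic glauber_reversible glauber_irreducible)
  have "stationary (assigns M) (glauber V C M) (marg V C M)"
    using reversible_imp_stationary[OF stochastic reversible _ total] by (simp add: marg_nonneg)
  moreover have "\<forall>\<pi>. stationary (assigns M) (glauber V C M) \<pi> \<longrightarrow> (\<forall>\<tau>\<in>assigns M. \<pi> \<tau> = marg V C M \<tau>)"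
    using reversible_stationary_unique[OF finite_assigns[OF \<open>finite M\<close>] stochastic irreducible
        reversible support total] by blast
  ultimately show ?thesis using support by blast
qed

end
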